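(* Let $n\ge1$. For an anticommutative pure basic sequence $\mathbf e$ of length $n$ in a signed group, let $s_+$ (resp. $s_-$) be the number of negative elements among $\{\mathbf e^{\mathbf p}:\mathbf p\in\{0,1\}^n\}$ when $\mathbf e$ is positive (resp. negative). Then: (1) $s_-=s_+$ if and only if $4\mid n$; in this case every pure anticommutative generator of length $n$ admits a replacement which is a pure anticommutative generator of the opposite signature. (2) $s_+=2^{n-1}-2^{n/2-1}\big(\cos\frac{n\pi}{4}+\sin\frac{n\pi}{4}\big)$ and $s_-=2^{n-1}-2^{n/2-1}\big(\cos\frac{n\pi}{4}-\sin\frac{n\pi}{4}\big)$.
   Context: A signed group is a group containing a central element $-1\neq1$ with $(-1)^2=1$ such that any two elements either commute or anticommute ($ef=-fe$) and each element $e$ has signature $e^2\in\{\pm1\}$ (positive if $e^2=1$, negative if $e^2=-1$); a sequence is pure if all its elements have the same signature (positive or negative). For $\mathbf p\in\{0,1\}^n$, $\mathbf e^{\mathbf p}=e_1^{p_1}\cdots e_n^{p_n}$. A sequence is basic if no $\mathbf e^{\mathbf p}$ with $\mathbf p\neq\mathbf0$ equals $\pm1$; a generator is a basic sequence, generating the group $\{\pm\mathbf e^{\mathbf p}\}$, and a replacement of a generator is another generator generating the same group. Anticommutative means any two distinct terms anticommute. *)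

theory Defs
  imports Complex_Main "HOL-Algebra.Group"
begin

definition signed_group :: "('a, 'b) monoid_scheme \<Rightarrow> 'a \<Rightarrow> bool" where
  "signed_group G mo \<longleftrightarrow> group G \<and> mo \<in> carrier G \<and> mo \<noteq> \<one>\<^bsub>G\<^esub>
     \<and> mo \<otimes>\<^bsub>G\<^esub> mo = \<one>\<^bsub>G\<^esub>
     \<and> (\<forall>x\<in>carrier G. mo \<otimes>\<^bsub>G\<^esub> x = x \<otimes>\<^bsub>G\<^esub> mo)
     \<and> (\<forall>x\<in>carrier G. \<forall>y\<in>carrier G.
          x \<otimes>\<^bsub>G\<^esub> y = y \<otimes>\<^bsub>G\<^esub> x \<or> x \<otimes>\<^bsub>G\<^esub> y = mo \<otimes>\<^bsub>G\<^esub> (y \<otimes>\<^bsub>G\<^esub> x))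
     \<and> (\<forall>x\<in>carrier G. x \<otimes>\<^bsub>G\<^esub> x = \<one>\<^bsub>G\<^esub> \<or> x \<otimes>\<^bsub>G\<^esub> x = mo)"

definition positive_el :: "('a, 'b) monoid_scheme \<Rightarrow> 'a \<Rightarrow> bool" where
  "positive_el G x \<longleftrightarrow> x \<otimes>\<^bsub>G\<^esub> x = \<one>\<^bsub>G\<^esub>"

definition negative_el :: "('a, 'b) monoid_scheme \<Rightarrow> 'a \<Rightarrow> 'a \<Rightarrow> bool" where
  "negative_el G mo x \<longleftrightarrow> x \<otimes>\<^bsub>G\<^esub> x = mo"

fun seq_pow :: "('a, 'b) monoid_scheme \<Rightarrow> 'a list \<Rightarrow> bool list \<Rightarrow> 'a" where
  "seq_pow G (x # xs) (b # bs) = (if b then x else \<one>\<^bsub>G\<^esub>) \<otimes>\<^bsub>G\<^esub> seq_pow G xs bs"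
| "seq_pow G _ _ = \<one>\<^bsub>G\<^esub>"

definition exps :: "nat \<Rightarrow> bool list set" where
  "exps n = {p. length p = n}"

definition seq_in :: "('a, 'b) monoid_scheme \<Rightarrow> 'a list \<Rightarrow> bool" where
  "seq_in G es \<longleftrightarrow> set es \<subseteq> carrier G"

definition pure_pos :: "('a, 'b) monoid_scheme \<Rightarrow> 'a list \<Rightarrow> bool" where
  "pure_pos G es \<longleftrightarrow> (\<forall>x\<in>set es. positive_el G x)"

definition pure_neg :: "('a, 'b) monoid_scheme \<Rightarrow> 'a \<Rightarrow> 'a list \<Rightarrow> bool" where
  "pure_neg G mo es \<longleftrightarrow> (\<forall>x\<in>set es. negative_el G mo x)"

definition pure :: "('a, 'b) monoid_scheme \<Rightarrow> 'a \<Rightarrow> 'a list \<Rightarrow> bool" where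
  "pure G mo es \<longleftrightarrow> pure_pos G es \<or> pure_neg G mo es"

definition basic :: "('a, 'b) monoid_scheme \<Rightarrow> 'a \<Rightarrow> 'a list \<Rightarrow> bool" where
  "basic G mo es \<longleftrightarrow> (\<forall>p\<in>exps (length es). p \<noteq> replicate (length es) False \<longrightarrow>
      seq_pow G es p \<noteq> \<one>\<^bsub>G\<^esub> \<and> seq_pow G es p \<noteq> mo)"

definition anticommutative :: "('a, 'b) monoid_scheme \<Rightarrow> 'a \<Rightarrow> 'a list \<Rightarrow> bool" where
  "anticommutative G mo es \<longleftrightarrow> (\<forall>i<length es. \<forall>j<length es. i \<noteq> j \<longrightarrow>
      es ! i \<otimes>\<^bsub>G\<^esub> es ! j = mo \<otimes>\<^bsub>G\<^esub> (es ! j \<otimes>\<^bsub>G\<^esub> es ! i))"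

definition generator :: "('a, 'b) monoid_scheme \<Rightarrow> 'a \<Rightarrow> 'a list \<Rightarrow> bool" where
  "generator G mo es \<longleftrightarrow> seq_in G es \<and> basic G mo es"

definition gen_group :: "('a, 'b) monoid_scheme \<Rightarrow> 'a \<Rightarrow> 'a list \<Rightarrow> 'a set" where
  "gen_group G mo es = {x. \<exists>p\<in>exps (length es).
       x = seq_pow G es p \<or> x = mo \<otimes>\<^bsub>G\<^esub> seq_pow G es p}"

definition replacement :: "('a, 'b) monoid_scheme \<Rightarrow> 'a \<Rightarrow> 'a list \<Rightarrow> 'a list \<Rightarrow> bool" where
  "replacement G mo es fs \<longleftrightarrow> generator G mo fs \<and> gen_group G mo fs = gen_group G mo es"

definition neg_count :: "('a, 'b) monoid_scheme \<Rightarrow> 'a \<Rightarrow> 'a list \<Rightarrow> nat" where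
  "neg_count G mo es = card {x \<in> seq_pow G es ` exps (length es). negative_el G mo x}"

end

theory Submission
  imports Defs
begin

text \<open>
  Signs are powers of \<open>mo\<close>, the element -1 of the paper. If every term of an
  anticommutative sequence squares to \<open>mo ^ \<sigma>\<close>, reordering the factors of \<open>e^p e^p\<close>
  gives \<open>(e^p)^2 = mo ^ (k choose 2 + \<sigma> k)\<close>, where \<open>k\<close> is the number of ones in \<open>p\<close>.
  Basicness makes \<open>p \<mapsto> e^p\<close> injective, so \<open>s_+\<close> and \<open>s_-\<close> count the bit strings of
  length \<open>n\<close> whose weight is 2 or 3, resp. 1 or 2, modulo 4. If \<open>c_r\<close> counts the weights
  congruent to \<open>r\<close>, then \<open>(c_0 - c_2) + i (c_1 - c_3) = (1 + i)^n = 2^(n/2) cis (n pi/4)\<close>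
  and \<open>c_0 + c_2 = c_1 + c_3 = 2^(n-1)\<close>; this gives the formulas, and \<open>s_+ = s_-\<close> iff
  \<open>sin (n pi/4) = 0\<close> iff \<open>4 dvd n\<close>.

  If \<open>4 dvd n\<close>, the product \<open>w\<close> of all terms satisfies \<open>w^2 = 1\<close> and anticommutes with
  every term (as \<open>n - 1\<close> is odd), so \<open>f_i = w e_i\<close> is anticommutative with \<open>f_i^2 = -e_i^2\<close>.
  As \<open>w\<close> has even weight, each \<open>f^p\<close> is \<open>\<plusminus>e^q\<close> with \<open>q \<noteq> 0\<close> whenever \<open>p \<noteq> 0\<close>; hence \<open>f\<close>
  is basic and generates a subgroup of order \<open>2^(n+1)\<close> of the group generated by \<open>e\<close>,
  that is, the whole of it.
\<close>

section \<open>Bit strings by weight modulo 4\<close>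

lemma finite_bool_lists_length: "finite {p :: bool list. length p = n \<and> P p}"
  using finite_lists_length_eq[of "UNIV :: bool set" n] by (rule rev_finite_subset) auto

lemma count_list_replicate: "count_list (replicate n x) y = (if x = y then n else 0)"
  by (induction n) auto

lemma count_list_True_eq_sum: "count_list p True = (\<Sum>j<length p. if p ! j then 1 else 0)"
  by (induction p) (simp_all add: sum.lessThan_Suc_shift del: sum.lessThan_Suc)

lemma map2_neq_eq_replicate_False_iff:
  "length p = length q \<Longrightarrow> map2 (\<noteq>) p q = replicate (length p) False \<longleftrightarrow> p = q"
  by (induction p q rule: list_induct2) auto

lemma Suc_choose_two: "Suc c choose 2 = (c choose 2) + c"
  by (simp add: numeral_2_eq_2)

lemma odd_choose_two_iff: "odd (c choose 2) \<longleftrightarrow> c mod 4 \<in> {2, 3}"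
proof (induction c)
  case (Suc c)
  have "c mod 4 \<in> {0, 1, 2, 3}" by auto
  moreover have "odd c \<longleftrightarrow> c mod 4 = 1 \<or> c mod 4 = 3" by presburger
  ultimately show ?case using Suc by (auto simp: Suc_choose_two mod_Suc)
qed (simp add: numeral_2_eq_2)

lemma odd_choose_two_plus_iff: "odd ((c choose 2) + c) \<longleftrightarrow> c mod 4 \<in> {1, 2}"
proof -
  have "c mod 4 \<in> {0, 1, 2, 3}" by auto
  then show ?thesis
    using odd_choose_two_iff[of "Suc c"] by (auto simp: Suc_choose_two mod_Suc)
qed

definition count_mod4 :: "nat \<Rightarrow> nat \<Rightarrow> nat" where
  "count_mod4 n r = card {p :: bool list. length p = n \<and> count_list p True mod 4 = r}"

lemma count_mod4_0: "count_mod4 0 r = (if r = 0 then 1 else 0)"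
proof -
  have "{p :: bool list. length p = 0 \<and> count_list p True mod 4 = r} = (if r = 0 then {[]} else {})"
    by auto
  then show ?thesis unfolding count_mod4_def by simp
qed

lemma count_mod4_Suc:
  assumes "r < 4"
  shows "count_mod4 (Suc n) r = count_mod4 n r + count_mod4 n ((r + 3) mod 4)"
proof -
  have shift: "Suc c mod 4 = r \<longleftrightarrow> c mod 4 = (r + 3) mod 4" for c
  proof -
    have "c mod 4 \<in> {0, 1, 2, 3}" "r \<in> {0, 1, 2, 3}" using assms by auto
    then show ?thesis by (auto simp: mod_Suc)
  qed
  have split: "{p :: bool list. length p = Suc n \<and> count_list p True mod 4 = r} =
      Cons False ` {p. length p = n \<and> count_list p True mod 4 = r} \<union>
      Cons True ` {p. length p = n \<and> count_list p True mod 4 = (r + 3) mod 4}"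
  proof (rule Set.set_eqI, rule iffI)
    fix p assume "p \<in> {p :: bool list. length p = Suc n \<and> count_list p True mod 4 = r}"
    then obtain b q where "p = b # q" "length q = n" "count_list (b # q) True mod 4 = r"
      by (auto simp: length_Suc_conv)
    then show "p \<in> Cons False ` {p. length p = n \<and> count_list p True mod 4 = r} \<union>
      Cons True ` {p. length p = n \<and> count_list p True mod 4 = (r + 3) mod 4}"
      by (cases b) (auto simp: shift)
  qed (auto simp: shift)
  show ?thesis
    unfolding count_mod4_def split
    by (subst card_Un_disjoint) (auto simp: finite_bool_lists_length card_image)
qed

lemma count_mod4_total:
  "count_mod4 n 0 + count_mod4 n 1 + count_mod4 n 2 + count_mod4 n 3 = 2 ^ n"
  by (induction n) (simp_all add: count_mod4_0 count_mod4_Suc)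

lemma count_mod4_halves:
  assumes "n \<ge> 1"
  shows "real (count_mod4 n 0) + real (count_mod4 n 2) = 2 ^ (n - 1)"
    and "real (count_mod4 n 1) + real (count_mod4 n 3) = 2 ^ (n - 1)"
proof -
  obtain m where "n = Suc m" using assms by (cases n) auto
  then have "count_mod4 n 0 + count_mod4 n 2 = 2 ^ (n - 1)"
    and "count_mod4 n 1 + count_mod4 n 3 = 2 ^ (n - 1)"
    using count_mod4_total[of m] by (simp_all add: count_mod4_Suc)
  then show "real (count_mod4 n 0) + real (count_mod4 n 2) = 2 ^ (n - 1)"
    and "real (count_mod4 n 1) + real (count_mod4 n 3) = 2 ^ (n - 1)"
    by (metis of_nat_add of_nat_numeral of_nat_power)+
qed

lemma count_mod4_gaussian:
  "Complex (real (count_mod4 n 0) - real (count_mod4 n 2))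
           (real (count_mod4 n 1) - real (count_mod4 n 3)) = (1 + \<i>) ^ n"
  by (induction n) (simp_all add: count_mod4_0 count_mod4_Suc complex_eq_iff)

lemma one_plus_i_power: "(1 + \<i>) ^ n = rcis (2 powr (real n / 2)) (real n * pi / 4)"
proof -
  have "1 + \<i> = rcis (sqrt 2) (pi / 4)"
    by (simp add: rcis_def cis.ctr cos_45 sin_45 complex_eq_iff)
  then show ?thesis
    by (simp add: DeMoivre2 powr_half_sqrt[symmetric] powr_realpow[symmetric] powr_powr)
qed

lemma count_mod4_trig:
  "real (count_mod4 n 0) - real (count_mod4 n 2) = 2 powr (real n / 2) * cos (real n * pi / 4)"
  "real (count_mod4 n 1) - real (count_mod4 n 3) = 2 powr (real n / 2) * sin (real n * pi / 4)"
  using arg_cong[OF count_mod4_gaussian, of Re] arg_cong[OF count_mod4_gaussian, of Im]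
  by (simp_all add: one_plus_i_power)

lemma card_count_mod4_pair:
  assumes "a \<noteq> b"
  shows "card {p :: bool list. length p = n \<and> count_list p True mod 4 \<in> {a, b}} =
    count_mod4 n a + count_mod4 n b"
proof -
  have "{p :: bool list. length p = n \<and> count_list p True mod 4 \<in> {a, b}} =
      {p. length p = n \<and> count_list p True mod 4 = a} \<union> {p. length p = n \<and> count_list p True mod 4 = b}"
    by auto
  then show ?thesis
    unfolding count_mod4_def using assms
    by (simp add: card_Un_disjoint finite_bool_lists_length disjoint_iff)
qed

lemma count_mod4_2_3:
  assumes "n \<ge> 1"
  shows "real (count_mod4 n 2) + real (count_mod4 n 3) =
    2 ^ (n - 1) - 2 powr (real n / 2 - 1) * (cos (real n * pi / 4) + sin (real n * pi / 4))"
  using count_mod4_halves[OF assms] count_mod4_trig[of n] by (simp add: powr_diff algebra_simps)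

lemma count_mod4_1_2:
  assumes "n \<ge> 1"
  shows "real (count_mod4 n 1) + real (count_mod4 n 2) =
    2 ^ (n - 1) - 2 powr (real n / 2 - 1) * (cos (real n * pi / 4) - sin (real n * pi / 4))"
  using count_mod4_halves[OF assms] count_mod4_trig[of n] by (simp add: powr_diff algebra_simps)

lemma count_mod4_1_eq_3_iff: "count_mod4 n 1 = count_mod4 n 3 \<longleftrightarrow> 4 dvd n"
proof -
  have "count_mod4 n 1 = count_mod4 n 3 \<longleftrightarrow> sin (real n * pi / 4) = 0"
    using count_mod4_trig(2)[of n] by auto
  also have "\<dots> \<longleftrightarrow> (\<exists>i::int. real n = 4 * of_int i)"
    by (auto simp: sin_zero_iff_int2 field_simps)
  also have "\<dots> \<longleftrightarrow> 4 dvd n"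
  proof
    assume "\<exists>i::int. real n = 4 * of_int i"
    then obtain i :: int where "real_of_int (int n) = real_of_int (4 * i)" by auto
    then have "int n = 4 * i" by (simp only: of_int_eq_iff)
    then show "4 dvd n" by presburger
  next
    assume "4 dvd n"
    then obtain k where "n = 4 * k" by blast
    then show "\<exists>i::int. real n = 4 * of_int i" by (intro exI[of _ "int k"]) simp
  qed
  finally show ?thesis .
qed

section \<open>Signed groups\<close>

locale signed_grp =
  fixes G :: "('a, 'b) monoid_scheme" (structure) and mo :: 'a
  assumes signed_group: "signed_group G mo"

sublocale signed_grp \<subseteq> group G
  using signed_group unfolding signed_group_def by simp

context signed_grp
begin

lemma mo_closed [simp]: "mo \<in> carrier G"
  using signed_group unfolding signed_group_def by simp

lemma mo_neq_one: "mo \<noteq> \<one>"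
  using signed_group unfolding signed_group_def by simp

lemma mo_mult_mo: "mo \<otimes> mo = \<one>"
  using signed_group unfolding signed_group_def by simp

lemma mo_central: "x \<in> carrier G \<Longrightarrow> mo \<otimes> x = x \<otimes> mo"
  using signed_group unfolding signed_group_def by simp

lemma square_cases: "x \<in> carrier G \<Longrightarrow> x \<otimes> x = \<one> \<or> x \<otimes> x = mo"
  using signed_group unfolding signed_group_def by simp

lemma mo_pow_eq: "mo [^] (k::nat) = (if even k then \<one> else mo)"
  by (induction k) (auto simp: mo_mult_mo)

lemma mo_pow_eq_iff: "mo [^] (a::nat) = mo [^] (b::nat) \<longleftrightarrow> (even a \<longleftrightarrow> even b)"
  using mo_neq_one by (auto simp: mo_pow_eq)

lemma mo_pow_eq_mo_iff: "mo [^] (k::nat) = mo \<longleftrightarrow> odd k"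
  using mo_neq_one by (simp add: mo_pow_eq)

lemma mo_pow_central: "x \<in> carrier G \<Longrightarrow> x \<otimes> mo [^] (k::nat) = mo [^] k \<otimes> x"
  by (simp add: mo_pow_eq mo_central)

lemma mo_pow_left_commute:
  "x \<in> carrier G \<Longrightarrow> y \<in> carrier G \<Longrightarrow> x \<otimes> (mo [^] (k::nat) \<otimes> y) = mo [^] k \<otimes> (x \<otimes> y)"
  by (simp add: m_assoc[symmetric] mo_pow_central)

lemma mo_pow_mult_assoc:
  "x \<in> carrier G \<Longrightarrow> mo [^] (a::nat) \<otimes> (mo [^] (b::nat) \<otimes> x) = mo [^] (a + b) \<otimes> x"
  by (simp add: m_assoc[symmetric] nat_pow_mult)

lemma mo_pow_mult_mo_pow:
  assumes "x \<in> carrier G" "y \<in> carrier G"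
  shows "(mo [^] (a::nat) \<otimes> x) \<otimes> (mo [^] (b::nat) \<otimes> y) = mo [^] (a + b) \<otimes> (x \<otimes> y)"
  using assms by (simp add: m_assoc mo_pow_left_commute[of x y b] mo_pow_mult_assoc)

lemma square_eq_mo_pow: "x \<in> carrier G \<Longrightarrow> \<exists>k::nat. x \<otimes> x = mo [^] k"
  using square_cases by (metis mo_pow_eq odd_one even_zero)

lemma anticommute_sym:
  assumes "x \<in> carrier G" "y \<in> carrier G" "x \<otimes> y = mo \<otimes> (y \<otimes> x)"
  shows "y \<otimes> x = mo \<otimes> (x \<otimes> y)"
  using assms by (simp add: m_assoc[symmetric] mo_mult_mo)

lemma seq_pow_closed [simp]: "set xs \<subseteq> carrier G \<Longrightarrow> seq_pow G xs p \<in> carrier G"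
proof (induction xs arbitrary: p)
  case (Cons x xs)
  then show ?case by (cases p) auto
qed simp

lemma anticommutative_tl: "anticommutative G mo (x # xs) \<Longrightarrow> anticommutative G mo xs"
  unfolding anticommutative_def by (metis Suc_less_eq length_Cons nat.inject nth_Cons_Suc)

lemma anticommutative_hd:
  "anticommutative G mo (x # xs) \<Longrightarrow> y \<in> set xs \<Longrightarrow> y \<otimes> x = mo \<otimes> (x \<otimes> y)"
  unfolding anticommutative_def in_set_conv_nth
  by (metis Suc_less_eq length_Cons nat.distinct(1) nth_Cons_0 nth_Cons_Suc zero_less_Suc)

lemma seq_pow_commute:
  fixes c :: "nat \<Rightarrow> nat"
  assumes "set xs \<subseteq> carrier G" "y \<in> carrier G" "length p = length xs"
    and "\<And>j. j < length xs \<Longrightarrow> xs ! j \<otimes> y = mo [^] c j \<otimes> (y \<otimes> xs ! j)"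
  shows "seq_pow G xs p \<otimes> y =
    mo [^] (\<Sum>j<length xs. if p ! j then c j else 0) \<otimes> (y \<otimes> seq_pow G xs p)"
  using assms
proof (induction xs arbitrary: p c)
  case (Cons x xs)
  then obtain b q where p: "p = b # q" by (cases p) auto
  let ?s = "\<Sum>j<length xs. if q ! j then c (Suc j) else 0"
  have x: "x \<in> carrier G" and xs: "set xs \<subseteq> carrier G" and Q: "seq_pow G xs q \<in> carrier G"
    using Cons.prems by auto
  have "xs ! j \<otimes> y = mo [^] c (Suc j) \<otimes> (y \<otimes> xs ! j)" if "j < length xs" for j
    using Cons.prems(4)[of "Suc j"] that by simp
  then have IH: "seq_pow G xs q \<otimes> y = mo [^] ?s \<otimes> (y \<otimes> seq_pow G xs q)"
    using Cons.IH[OF xs Cons.prems(2)] Cons.prems(3) p by simp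
  have x_y: "x \<otimes> y = mo [^] c 0 \<otimes> (y \<otimes> x)"
    using Cons.prems(4)[of 0] by simp
  have sum: "(\<Sum>j<length (x # xs). if p ! j then c j else 0) = (if b then c 0 else 0) + ?s"
    by (simp add: p sum.lessThan_Suc_shift del: sum.lessThan_Suc)
  show ?case
  proof (cases b)
    case True
    have "seq_pow G (x # xs) p \<otimes> y = x \<otimes> (seq_pow G xs q \<otimes> y)"
      using True p x Q Cons.prems(2) by (simp add: m_assoc)
    also have "\<dots> = mo [^] ?s \<otimes> ((x \<otimes> y) \<otimes> seq_pow G xs q)"
      using IH x Q Cons.prems(2)
      by (simp add: mo_pow_left_commute m_assoc)
    also have "\<dots> = mo [^] (?s + c 0) \<otimes> (y \<otimes> seq_pow G (x # xs) p)"
      using x_y True p x Q Cons.prems(2) by (simp add: mo_pow_mult_assoc m_assoc)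
    finally show ?thesis using True sum by (simp add: add.commute)
  next
    case False
    show ?thesis unfolding sum using False IH Q p by simp
  qed
qed simp

lemma seq_pow_anticommute:
  assumes "set xs \<subseteq> carrier G" "y \<in> carrier G" "length p = length xs"
    and "\<And>x. x \<in> set xs \<Longrightarrow> x \<otimes> y = mo \<otimes> (y \<otimes> x)"
  shows "seq_pow G xs p \<otimes> y = mo [^] count_list p True \<otimes> (y \<otimes> seq_pow G xs p)"
proof -
  have "xs ! j \<otimes> y = mo [^] (1::nat) \<otimes> (y \<otimes> xs ! j)" if "j < length xs" for j
    using assms(4)[OF nth_mem[OF that]] by simp
  from seq_pow_commute[OF assms(1-3) this] show ?thesis
    using assms(3) by (simp add: count_list_True_eq_sum)
qed

lemma seq_pow_square:
  assumes "set xs \<subseteq> carrier G" "anticommutative G mo xs" "length p = length xs"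
    and "\<And>x. x \<in> set xs \<Longrightarrow> x \<otimes> x = mo [^] \<sigma>"
  shows "seq_pow G xs p \<otimes> seq_pow G xs p =
    mo [^] ((count_list p True choose 2) + \<sigma> * count_list p True)"
  using assms
proof (induction xs arbitrary: p)
  case (Cons x xs)
  then obtain b q where p: "p = b # q" by (cases p) auto
  let ?Q = "seq_pow G xs q" and ?k = "count_list q True"
  have x: "x \<in> carrier G" and xs: "set xs \<subseteq> carrier G" and Q: "?Q \<in> carrier G"
    using Cons.prems by auto
  have IH: "?Q \<otimes> ?Q = mo [^] ((?k choose 2) + \<sigma> * ?k)"
    using Cons.prems p anticommutative_tl by (intro Cons.IH) auto
  have Q_x: "?Q \<otimes> x = mo [^] ?k \<otimes> (x \<otimes> ?Q)"
    using seq_pow_anticommute[OF xs x] Cons.prems p anticommutative_hd by auto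
  show ?case
  proof (cases b)
    case True
    have "seq_pow G (x # xs) p \<otimes> seq_pow G (x # xs) p = x \<otimes> ((?Q \<otimes> x) \<otimes> ?Q)"
      using True p x Q by (simp add: m_assoc)
    also have "\<dots> = mo [^] ?k \<otimes> ((x \<otimes> x) \<otimes> (?Q \<otimes> ?Q))"
      using Q_x x Q by (simp add: mo_pow_left_commute m_assoc)
    also have "\<dots> = mo [^] (?k + (\<sigma> + ((?k choose 2) + \<sigma> * ?k)))"
      using Cons.prems(4) IH by (simp add: nat_pow_mult)
    finally show ?thesis
      using True p by (simp add: Suc_choose_two algebra_simps)
  next
    case False
    then show ?thesis using IH p Q by simp
  qed
qed (simp add: numeral_2_eq_2)

lemma mo_pow_solve:
  assumes "x \<in> carrier G" "mo [^] (a::nat) \<otimes> x = mo [^] (b::nat)"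
  shows "x = mo [^] (a + b)"
proof -
  have "mo [^] a \<otimes> (mo [^] a \<otimes> x) = mo [^] a \<otimes> mo [^] b"
    using assms(2) by simp
  moreover have "mo [^] (a + a) = \<one>" by (simp add: mo_pow_eq)
  ultimately show ?thesis using assms(1) by (simp add: mo_pow_mult_assoc nat_pow_mult)
qed

lemma basic_seq_pow_eq_mo_pow:
  assumes "basic G mo xs" "length p = length xs" "seq_pow G xs p = mo [^] (k::nat)"
  shows "p = replicate (length xs) False"
  using assms unfolding basic_def exps_def by (auto simp: mo_pow_eq split: if_splits)

lemma seq_pow_mult:
  assumes "set xs \<subseteq> carrier G" "anticommutative G mo xs"
    and "length p = length xs" "length q = length xs"
  shows "\<exists>t::nat. seq_pow G xs p \<otimes> seq_pow G xs q = mo [^] t \<otimes> seq_pow G xs (map2 (\<noteq>) p q)"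
  using assms
proof (induction xs arbitrary: p q)
  case (Cons x xs)
  obtain a p' b q' where p: "p = a # p'" and q: "q = b # q'"
    using Cons.prems(3,4) by (cases p; cases q) auto
  let ?P = "seq_pow G xs p'" and ?Q = "seq_pow G xs q'" and ?R = "seq_pow G xs (map2 (\<noteq>) p' q')"
  let ?Xa = "if a then x else \<one>" and ?Xb = "if b then x else \<one>" and ?Xab = "if a \<noteq> b then x else \<one>"
  have x: "x \<in> carrier G" and xs: "set xs \<subseteq> carrier G" using Cons.prems by auto
  then have closed: "?P \<in> carrier G" "?Q \<in> carrier G" "?R \<in> carrier G"
    "?Xa \<in> carrier G" "?Xb \<in> carrier G" "?Xab \<in> carrier G" by auto
  obtain t :: nat where t: "?P \<otimes> ?Q = mo [^] t \<otimes> ?R"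
    using Cons.IH[OF xs anticommutative_tl[OF Cons.prems(2)]] Cons.prems(3,4) p q by auto
  obtain u :: nat where u: "?P \<otimes> ?Xb = mo [^] u \<otimes> (?Xb \<otimes> ?P)"
  proof (cases b)
    case True
    then show ?thesis
      using that seq_pow_anticommute[OF xs x] Cons.prems anticommutative_hd p by auto
  next
    case False
    then show ?thesis using that[of 0] closed by simp
  qed
  obtain v :: nat where v: "?Xa \<otimes> ?Xb = mo [^] v \<otimes> ?Xab"
  proof (cases "a \<and> b")
    case True
    then show ?thesis using that square_eq_mo_pow[OF x] by auto
  next
    case False
    then show ?thesis using that[of 0] x by auto
  qed
  have "seq_pow G (x # xs) p \<otimes> seq_pow G (x # xs) q = ?Xa \<otimes> ((?P \<otimes> ?Xb) \<otimes> ?Q)"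
    using p q closed by (simp add: m_assoc)
  also have "\<dots> = mo [^] u \<otimes> ((?Xa \<otimes> ?Xb) \<otimes> (?P \<otimes> ?Q))"
    using u closed by (simp add: mo_pow_left_commute m_assoc)
  also have "\<dots> = mo [^] (u + (v + t)) \<otimes> (?Xab \<otimes> ?R)"
    using v t closed by (simp add: mo_pow_mult_mo_pow mo_pow_mult_assoc)
  also have "\<dots> = mo [^] (u + (v + t)) \<otimes> seq_pow G (x # xs) (map2 (\<noteq>) p q)"
    using p q by simp
  finally show ?case by blast
qed (intro exI[of _ 0], simp)

lemma seq_pow_signed_eqD:
  assumes "set xs \<subseteq> carrier G" "anticommutative G mo xs" "basic G mo xs"
    and "length p = length xs" "length q = length xs"
    and eq: "mo [^] (a::nat) \<otimes> seq_pow G xs p = mo [^] (b::nat) \<otimes> seq_pow G xs q"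
  shows "p = q" and "even a \<longleftrightarrow> even b"
proof -
  let ?P = "seq_pow G xs p" and ?Q = "seq_pow G xs q" and ?R = "seq_pow G xs (map2 (\<noteq>) p q)"
  have closed: "?P \<in> carrier G" "?Q \<in> carrier G" "?R \<in> carrier G" using assms(1) by auto
  obtain t :: nat where t: "?P \<otimes> ?Q = mo [^] t \<otimes> ?R"
    using seq_pow_mult[OF assms(1,2,4,5)] by blast
  obtain k :: nat where k: "?Q \<otimes> ?Q = mo [^] k"
    using square_eq_mo_pow[OF closed(2)] by blast
  have "(mo [^] a \<otimes> ?P) \<otimes> ?Q = (mo [^] b \<otimes> ?Q) \<otimes> ?Q" using eq by simp
  then have "mo [^] (a + t) \<otimes> ?R = mo [^] (b + k)"
    using closed t k by (simp add: m_assoc mo_pow_mult_assoc nat_pow_mult)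
  then have "?R = mo [^] (a + t + (b + k))" by (rule mo_pow_solve[OF closed(3)])
  then have "map2 (\<noteq>) p q = replicate (length xs) False"
    using assms(4,5) by (intro basic_seq_pow_eq_mo_pow[OF assms(3)]) auto
  then show pq: "p = q"
    using map2_neq_eq_replicate_False_iff[of p q] assms(4,5) by simp
  have "mo [^] a = mo [^] b" using eq closed(1) unfolding pq by simp
  then show "even a \<longleftrightarrow> even b" by (simp add: mo_pow_eq_iff)
qed

lemma seq_pow_inj_on:
  assumes "set xs \<subseteq> carrier G" "anticommutative G mo xs" "basic G mo xs"
  shows "inj_on (seq_pow G xs) (exps (length xs))"
proof (rule inj_onI)
  fix p q assume "p \<in> exps (length xs)" "q \<in> exps (length xs)" "seq_pow G xs p = seq_pow G xs q"
  then show "p = q"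
    using seq_pow_signed_eqD(1)[OF assms, of p q 0 0] assms(1) unfolding exps_def by simp
qed

lemma neg_count_eq_card:
  assumes "set xs \<subseteq> carrier G" "anticommutative G mo xs" "basic G mo xs"
    and "\<And>x. x \<in> set xs \<Longrightarrow> x \<otimes> x = mo [^] \<sigma>"
  shows "neg_count G mo xs = card {p. length p = length xs \<and>
    odd ((count_list p True choose 2) + \<sigma> * count_list p True)}"
proof -
  let ?E = "exps (length xs)"
  have "{x \<in> seq_pow G xs ` ?E. negative_el G mo x} =
      seq_pow G xs ` {p \<in> ?E. negative_el G mo (seq_pow G xs p)}"
    by blast
  then have "neg_count G mo xs = card (seq_pow G xs ` {p \<in> ?E. negative_el G mo (seq_pow G xs p)})"
    unfolding neg_count_def by simp
  also have "\<dots> = card {p \<in> ?E. negative_el G mo (seq_pow G xs p)}"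
    by (rule card_image) (rule inj_on_subset[OF seq_pow_inj_on[OF assms(1-3)]], auto)
  also have "{p \<in> ?E. negative_el G mo (seq_pow G xs p)} = {p. length p = length xs \<and>
      odd ((count_list p True choose 2) + \<sigma> * count_list p True)}"
  proof -
    have "negative_el G mo (seq_pow G xs p) \<longleftrightarrow>
        odd ((count_list p True choose 2) + \<sigma> * count_list p True)" if "length p = length xs" for p
      using seq_pow_square[OF assms(1,2) that assms(4)]
      unfolding negative_el_def by (simp add: mo_pow_eq_mo_iff)
    then show ?thesis unfolding exps_def by blast
  qed
  finally show ?thesis .
qed

lemma gen_group_eq_image:
  assumes "set xs \<subseteq> carrier G"
  shows "gen_group G mo xs = (\<lambda>(k, p). mo [^] k \<otimes> seq_pow G xs p) ` ({0::nat, 1} \<times> exps (length xs))"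
  using assms unfolding gen_group_def by (auto simp: image_iff)

lemma card_gen_group:
  assumes "set xs \<subseteq> carrier G" "anticommutative G mo xs" "basic G mo xs"
  shows "card (gen_group G mo xs) = 2 ^ Suc (length xs)"
proof -
  have "inj_on (\<lambda>(k, p). mo [^] k \<otimes> seq_pow G xs p) ({0::nat, 1} \<times> exps (length xs))"
  proof (rule inj_onI, clarify)
    fix k p k' p'
    assume k: "k \<in> {0::nat, 1}" "k' \<in> {0::nat, 1}" and "p \<in> exps (length xs)" "p' \<in> exps (length xs)"
      and eq: "mo [^] k \<otimes> seq_pow G xs p = mo [^] k' \<otimes> seq_pow G xs p'"
    then have "p = p'" "even k \<longleftrightarrow> even k'"
      using seq_pow_signed_eqD[OF assms _ _ eq] unfolding exps_def by auto
    then show "k = k' \<and> p = p'" using k by auto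
  qed
  moreover have "card (exps (length xs)) = 2 ^ length xs"
    using card_lists_length_eq[of "UNIV :: bool set"] unfolding exps_def by simp
  ultimately show ?thesis
    unfolding gen_group_eq_image[OF assms(1)] by (simp add: card_image card_cartesian_product)
qed

lemma basicI:
  assumes "\<And>p k. length p = length xs \<Longrightarrow> seq_pow G xs p = mo [^] (k::nat) \<Longrightarrow>
    p = replicate (length xs) False"
  shows "basic G mo xs"
  unfolding basic_def exps_def
  using assms[where k = 0] assms[where k = 1] by auto

lemma mo_pow_mult_mem_gen_group:
  assumes "set xs \<subseteq> carrier G" "length p = length xs"
  shows "mo [^] (k::nat) \<otimes> seq_pow G xs p \<in> gen_group G mo xs"
  using assms unfolding gen_group_def exps_def by (auto simp: mo_pow_eq)

section \<open>Twisting by an anticommuting involution\<close>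

lemma twist_mult:
  assumes "w \<in> carrier G" "x \<in> carrier G" "y \<in> carrier G"
    and "w \<otimes> w = \<one>" "x \<otimes> w = mo \<otimes> (w \<otimes> x)"
  shows "(w \<otimes> x) \<otimes> (w \<otimes> y) = mo \<otimes> (x \<otimes> y)"
proof -
  have "(w \<otimes> x) \<otimes> (w \<otimes> y) = w \<otimes> ((x \<otimes> w) \<otimes> y)"
    using assms(1-3) by (simp add: m_assoc)
  also have "\<dots> = (w \<otimes> mo) \<otimes> (w \<otimes> (x \<otimes> y))"
    using assms by (simp add: m_assoc)
  also have "\<dots> = mo \<otimes> ((w \<otimes> w) \<otimes> (x \<otimes> y))"
    using assms(1-3) by (simp add: mo_central m_assoc)
  finally show ?thesis using assms by simp
qed

lemma anticommutative_twist:
  assumes "set xs \<subseteq> carrier G" "anticommutative G mo xs"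
    and "w \<in> carrier G" "w \<otimes> w = \<one>" "\<And>x. x \<in> set xs \<Longrightarrow> x \<otimes> w = mo \<otimes> (w \<otimes> x)"
  shows "anticommutative G mo (map (\<lambda>x. w \<otimes> x) xs)"
  unfolding anticommutative_def length_map
proof (intro allI impI)
  fix i j assume ij: "i < length xs" "j < length xs" "i \<noteq> j"
  then have x: "xs ! i \<in> set xs" "xs ! j \<in> set xs" by auto
  then have "(w \<otimes> xs ! i) \<otimes> (w \<otimes> xs ! j) = mo \<otimes> (xs ! i \<otimes> xs ! j)"
    "(w \<otimes> xs ! j) \<otimes> (w \<otimes> xs ! i) = mo \<otimes> (xs ! j \<otimes> xs ! i)"
    using assms(1,3-5) by (auto intro!: twist_mult)
  moreover have "xs ! i \<otimes> xs ! j = mo \<otimes> (xs ! j \<otimes> xs ! i)"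
    using assms(2) ij unfolding anticommutative_def by blast
  ultimately show "map (\<lambda>x. w \<otimes> x) xs ! i \<otimes> map (\<lambda>x. w \<otimes> x) xs ! j =
      mo \<otimes> (map (\<lambda>x. w \<otimes> x) xs ! j \<otimes> map (\<lambda>x. w \<otimes> x) xs ! i)"
    using ij by simp
qed

lemma seq_pow_twist:
  assumes "set xs \<subseteq> carrier G" "w \<in> carrier G" "w \<otimes> w = \<one>"
    and "\<And>x. x \<in> set xs \<Longrightarrow> x \<otimes> w = mo \<otimes> (w \<otimes> x)" "length p = length xs"
  shows "\<exists>t::nat. seq_pow G (map (\<lambda>x. w \<otimes> x) xs) p =
    mo [^] t \<otimes> ((if odd (count_list p True) then w else \<one>) \<otimes> seq_pow G xs p)"
  using assms(1,4,5)
proof (induction xs arbitrary: p)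
  case (Cons x xs)
  then obtain b q where p: "p = b # q" by (cases p) auto
  let ?Q = "seq_pow G xs q" and ?W = "if odd (count_list q True) then w else \<one>"
  have x: "x \<in> carrier G" and xs: "set xs \<subseteq> carrier G" and Q: "?Q \<in> carrier G"
    using Cons.prems by auto
  have "\<exists>t::nat. seq_pow G (map (\<lambda>x. w \<otimes> x) xs) q = mo [^] t \<otimes> (?W \<otimes> ?Q)"
    by (rule Cons.IH[OF xs]) (use Cons.prems p in auto)
  then obtain t :: nat where t: "seq_pow G (map (\<lambda>x. w \<otimes> x) xs) q = mo [^] t \<otimes> (?W \<otimes> ?Q)" ..
  show ?case
  proof (cases b)
    case False
    then show ?thesis using t p Q assms(2) by (intro exI[of _ t]) simp
  next
    case True
    have "seq_pow G (map (\<lambda>x. w \<otimes> x) (x # xs)) p = mo [^] t \<otimes> ((w \<otimes> x) \<otimes> (?W \<otimes> ?Q))"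
      using True p t x Q assms(2) by (simp add: mo_pow_left_commute)
    also have "\<dots> = mo [^] (t + (if odd (count_list q True) then 1 else 0)) \<otimes>
        ((if odd (count_list p True) then w else \<one>) \<otimes> seq_pow G (x # xs) p)"
    proof (cases "odd (count_list q True)")
      case True
      then show ?thesis
        using twist_mult[OF assms(2) x Q assms(3)] Cons.prems(2) \<open>b\<close> p x Q assms(2)
        by (simp add: m_assoc)
    next
      case False
      then show ?thesis using \<open>b\<close> p x Q assms(2) by (simp add: m_assoc)
    qed
    finally show ?thesis by blast
  qed
qed (intro exI[of _ 0], simp)

context
  fixes xs :: "'a list" and \<sigma> :: nat and w :: 'a and fs :: "'a list"
  assumes xs_closed: "set xs \<subseteq> carrier G"
    and xs_anticommutative: "anticommutative G mo xs"
    and xs_square: "\<And>x. x \<in> set xs \<Longrightarrow> x \<otimes> x = mo [^] \<sigma>"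
    and four_dvd_length: "4 dvd length xs"
  defines "w \<equiv> seq_pow G xs (replicate (length xs) True)"
    and "fs \<equiv> map (\<lambda>x. w \<otimes> x) xs"
begin

lemma full_product_closed: "w \<in> carrier G"
  unfolding w_def using xs_closed by simp

lemma full_product_square: "w \<otimes> w = \<one>"
proof -
  have "length xs mod 4 = 0" using four_dvd_length by simp
  then have "even (length xs choose 2)" using odd_choose_two_iff[of "length xs"] by simp
  moreover have "even (\<sigma> * length xs)" using four_dvd_length by auto
  ultimately show ?thesis
    unfolding w_def
    using seq_pow_square[OF xs_closed xs_anticommutative _ xs_square, of "replicate (length xs) True"]
    by (simp add: count_list_replicate mo_pow_eq)
qed

lemma anticommute_full_product:
  assumes "x \<in> set xs"
  shows "x \<otimes> w = mo \<otimes> (w \<otimes> x)"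
proof -
  obtain i where i: "i < length xs" and x: "x = xs ! i"
    using assms by (auto simp: in_set_conv_nth)
  have x_closed: "x \<in> carrier G" using assms xs_closed by auto
  have "xs ! j \<otimes> x = mo [^] (if j = i then 0 else 1 :: nat) \<otimes> (x \<otimes> xs ! j)"
    if "j < length xs" for j
  proof (cases "j = i")
    case True
    then show ?thesis using x x_closed by simp
  next
    case False
    then have "xs ! j \<otimes> xs ! i = mo \<otimes> (xs ! i \<otimes> xs ! j)"
      using xs_anticommutative that i unfolding anticommutative_def by blast
    then show ?thesis using False unfolding x by simp
  qed
  then have "w \<otimes> x = mo [^] (\<Sum>j<length xs. if j = i then 0 else 1 :: nat) \<otimes> (x \<otimes> w)"
    unfolding w_def using seq_pow_commute[OF xs_closed x_closed] by simp
  also have "(\<Sum>j<length xs. if j = i then 0 else 1 :: nat) = length xs - 1"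
    using i by (subst sum.remove[of _ i]) auto
  also have "mo [^] (length xs - 1) = mo"
    using four_dvd_length i by (auto simp: mo_pow_eq_mo_iff)
  finally show ?thesis
    using anticommute_sym[OF full_product_closed x_closed] by simp
qed

lemma full_twist_closed: "set fs \<subseteq> carrier G"
  unfolding fs_def using xs_closed full_product_closed by auto

lemma anticommutative_full_twist: "anticommutative G mo fs"
  unfolding fs_def
  using anticommutative_twist[OF xs_closed xs_anticommutative full_product_closed
      full_product_square anticommute_full_product] .

lemma square_full_twist:
  assumes "y \<in> set fs"
  shows "y \<otimes> y = mo [^] Suc \<sigma>"
proof -
  obtain x where x: "x \<in> set xs" and y: "y = w \<otimes> x" using assms unfolding fs_def by auto
  have "y \<otimes> y = mo \<otimes> (x \<otimes> x)"
    using x xs_closed unfolding y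
    by (intro twist_mult full_product_closed full_product_square anticommute_full_product) auto
  then show ?thesis using xs_square[OF x] mo_central[of "mo [^] \<sigma>"] by simp
qed

lemma seq_pow_full_twist:
  assumes "length p = length xs"
  obtains q and t :: nat where "length q = length xs"
    and "seq_pow G fs p = mo [^] t \<otimes> seq_pow G xs q"
    and "q = replicate (length xs) False \<Longrightarrow> p = replicate (length xs) False"
proof -
  obtain t :: nat where t: "seq_pow G fs p =
      mo [^] t \<otimes> ((if odd (count_list p True) then w else \<one>) \<otimes> seq_pow G xs p)"
    using seq_pow_twist[OF xs_closed full_product_closed full_product_square
        anticommute_full_product assms] unfolding fs_def by blast
  show ?thesis
  proof (cases "odd (count_list p True)")
    case False
    then show ?thesis using that[of p t] t assms xs_closed by simp
  next
    case True
    let ?q = "map2 (\<noteq>) (replicate (length xs) True) p"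
    have "\<exists>u::nat. w \<otimes> seq_pow G xs p = mo [^] u \<otimes> seq_pow G xs ?q"
      unfolding w_def by (rule seq_pow_mult[OF xs_closed xs_anticommutative _ assms]) simp
    then obtain u :: nat where u: "w \<otimes> seq_pow G xs p = mo [^] u \<otimes> seq_pow G xs ?q" ..
    have "seq_pow G fs p = mo [^] (t + u) \<otimes> seq_pow G xs ?q"
      using t u True xs_closed by (simp add: mo_pow_mult_assoc)
    moreover have "?q \<noteq> replicate (length xs) False"
    proof
      assume "?q = replicate (length xs) False"
      then have "p = replicate (length xs) True"
        using map2_neq_eq_replicate_False_iff[of "replicate (length xs) True" p] assms by simp
      then show False using True four_dvd_length by (auto simp: count_list_replicate)
    qed
    ultimately show ?thesis using that[of ?q "t + u"] assms by simp
  qed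
qed

lemma basic_full_twist:
  assumes "basic G mo xs"
  shows "basic G mo fs"
proof (rule basicI)
  fix p and k :: nat
  assume p: "length p = length fs" and k: "seq_pow G fs p = mo [^] k"
  have p_length: "length p = length xs" using p unfolding fs_def by simp
  obtain q and t :: nat where q: "length q = length xs" "seq_pow G fs p = mo [^] t \<otimes> seq_pow G xs q"
    and q_zero: "q = replicate (length xs) False \<Longrightarrow> p = replicate (length xs) False"
    using seq_pow_full_twist[OF p_length] by blast
  have "seq_pow G xs q = mo [^] (t + k)"
    using q k xs_closed by (intro mo_pow_solve) auto
  then show "p = replicate (length fs) False"
    using basic_seq_pow_eq_mo_pow[OF assms q(1)] q_zero unfolding fs_def by simp
qed

lemma gen_group_full_twist_subset: "gen_group G mo fs \<subseteq> gen_group G mo xs"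
proof
  fix x assume "x \<in> gen_group G mo fs"
  then obtain p where p: "length p = length xs"
    and "x = seq_pow G fs p \<or> x = mo \<otimes> seq_pow G fs p"
    unfolding gen_group_def exps_def fs_def by auto
  then have "x = mo [^] (0::nat) \<otimes> seq_pow G fs p \<or> x = mo [^] (1::nat) \<otimes> seq_pow G fs p"
    using full_twist_closed by simp
  then obtain k :: nat where x: "x = mo [^] k \<otimes> seq_pow G fs p" by blast
  obtain q and t :: nat where q: "length q = length xs" "seq_pow G fs p = mo [^] t \<otimes> seq_pow G xs q"
    using seq_pow_full_twist[OF p] by blast
  have "x = mo [^] (k + t) \<otimes> seq_pow G xs q"
    using x q xs_closed by (simp add: mo_pow_mult_assoc)
  then show "x \<in> gen_group G mo xs"
    using mo_pow_mult_mem_gen_group[OF xs_closed q(1)] by simp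
qed

lemma replacement_full_twist:
  assumes "basic G mo xs"
  shows "replacement G mo xs fs"
proof -
  have "finite (gen_group G mo xs)"
    unfolding gen_group_eq_image[OF xs_closed] exps_def
    using finite_bool_lists_length[of "length xs" "\<lambda>_. True"] by simp
  moreover have "card (gen_group G mo fs) = card (gen_group G mo xs)"
    using card_gen_group[OF full_twist_closed anticommutative_full_twist basic_full_twist[OF assms]]
      card_gen_group[OF xs_closed xs_anticommutative assms]
    unfolding fs_def by simp
  ultimately have "gen_group G mo fs = gen_group G mo xs"
    using card_subset_eq gen_group_full_twist_subset by blast
  then show ?thesis
    unfolding replacement_def generator_def seq_in_def
    using full_twist_closed basic_full_twist[OF assms] by blast
qed

end

end

section \<open>Pure anticommutative generators\<close>

lemma pure_pos_pure_neg_Nil: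
  assumes "signed_group G mo" "pure_pos G es" "pure_neg G mo es"
  shows "es = []"
  using assms unfolding signed_group_def pure_pos_def pure_neg_def positive_el_def negative_el_def
  by (metis list.set_intros(1) neq_Nil_conv)

lemma neg_count_pure_pos:
  assumes "signed_group G mo" "seq_in G es" "anticommutative G mo es" "basic G mo es" "pure_pos G es"
  shows "neg_count G mo es = count_mod4 (length es) 2 + count_mod4 (length es) 3"
proof -
  interpret signed_grp G mo by (rule signed_grp.intro[OF assms(1)])
  have "neg_count G mo es = card {p. length p = length es \<and> odd (count_list p True choose 2)}"
    using neg_count_eq_card[OF _ assms(3,4), of 0] assms(2,5)
    unfolding seq_in_def pure_pos_def positive_el_def by simp
  also have "\<dots> = card {p :: bool list. length p = length es \<and> count_list p True mod 4 \<in> {2, 3}}"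
    by (simp only: odd_choose_two_iff)
  also have "\<dots> = count_mod4 (length es) 2 + count_mod4 (length es) 3"
    by (rule card_count_mod4_pair) simp
  finally show ?thesis .
qed

lemma neg_count_pure_neg:
  assumes "signed_group G mo" "seq_in G es" "anticommutative G mo es" "basic G mo es" "pure_neg G mo es"
  shows "neg_count G mo es = count_mod4 (length es) 1 + count_mod4 (length es) 2"
proof -
  interpret signed_grp G mo by (rule signed_grp.intro[OF assms(1)])
  have "neg_count G mo es =
      card {p. length p = length es \<and> odd ((count_list p True choose 2) + count_list p True)}"
    using neg_count_eq_card[OF _ assms(3,4), of 1] assms(2,5)
    unfolding seq_in_def pure_neg_def negative_el_def by simp
  also have "\<dots> = card {p :: bool list. length p = length es \<and> count_list p True mod 4 \<in> {1, 2}}"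
    by (simp only: odd_choose_two_plus_iff)
  also have "\<dots> = count_mod4 (length es) 1 + count_mod4 (length es) 2"
    by (rule card_count_mod4_pair) simp
  finally show ?thesis .
qed

lemma pure_replacement_opposite_signature:
  assumes "signed_group G mo" "generator G mo es" "anticommutative G mo es" "pure G mo es"
    and "4 dvd length es"
  shows "\<exists>fs. replacement G mo es fs \<and> anticommutative G mo fs \<and> pure G mo fs \<and>
    (pure_pos G es \<longrightarrow> pure_neg G mo fs) \<and> (pure_neg G mo es \<longrightarrow> pure_pos G fs)"
proof -
  interpret signed_grp G mo by (rule signed_grp.intro[OF assms(1)])
  have closed: "set es \<subseteq> carrier G" and basic: "basic G mo es"
    using assms(2) unfolding generator_def seq_in_def by auto
  have twist: "\<exists>fs. replacement G mo es fs \<and> anticommutative G mo fs \<and> length fs = length es \<and>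
      (\<forall>y\<in>set fs. y \<otimes>\<^bsub>G\<^esub> y = mo [^]\<^bsub>G\<^esub> Suc \<sigma>)"
    if "\<And>x. x \<in> set es \<Longrightarrow> x \<otimes>\<^bsub>G\<^esub> x = mo [^]\<^bsub>G\<^esub> \<sigma>" for \<sigma> :: nat
    using replacement_full_twist[OF closed assms(3) that assms(5) basic]
      anticommutative_full_twist[OF closed assms(3) that assms(5)]
      square_full_twist[OF closed assms(3) that assms(5)]
    by (intro exI[of _ "map (\<lambda>x. seq_pow G es (replicate (length es) True) \<otimes>\<^bsub>G\<^esub> x) es"])
      (simp del: nat_pow_Suc)
  show ?thesis
  proof (cases "pure_pos G es")
    case True
    then obtain fs where fs: "replacement G mo es fs" "anticommutative G mo fs" "length fs = length es"
        "\<forall>y\<in>set fs. y \<otimes>\<^bsub>G\<^esub> y = mo [^]\<^bsub>G\<^esub> Suc 0"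
      using twist[of 0] unfolding pure_pos_def positive_el_def by auto
    have "pure_neg G mo fs" using fs(4) unfolding pure_neg_def negative_el_def by simp
    moreover have "pure_pos G fs" if "pure_neg G mo es"
      using pure_pos_pure_neg_Nil[OF assms(1) True that] fs(3) unfolding pure_pos_def by simp
    ultimately show ?thesis using fs unfolding pure_def by blast
  next
    case False
    then have neg: "pure_neg G mo es" using assms(4) unfolding pure_def by simp
    then obtain fs where fs: "replacement G mo es fs" "anticommutative G mo fs"
        "\<forall>y\<in>set fs. y \<otimes>\<^bsub>G\<^esub> y = mo [^]\<^bsub>G\<^esub> Suc 1"
      using twist[of 1] unfolding pure_neg_def negative_el_def by auto
    have "pure_pos G fs" using fs(3) unfolding pure_pos_def positive_el_def by (simp add: mo_mult_mo)
    then show ?thesis using fs False unfolding pure_def by blast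
  qed
qed

theorem proposition4p1:
  fixes n :: nat
  assumes "n \<ge> 1"
  shows
  "(\<forall>(G :: ('a, 'b) monoid_scheme) mo es.
      signed_group G mo \<and> seq_in G es \<and> length es = n \<and> anticommutative G mo es
      \<and> basic G mo es \<and> pure_pos G es \<longrightarrow>
      real (neg_count G mo es) = 2 ^ (n - 1) - 2 powr (real n / 2 - 1) *
          (cos (real n * pi / 4) + sin (real n * pi / 4)))
 \<and>
   (\<forall>(G :: ('a, 'b) monoid_scheme) mo es.
      signed_group G mo \<and> seq_in G es \<and> length es = n \<and> anticommutative G mo es
      \<and> basic G mo es \<and> pure_neg G mo es \<longrightarrow>
      real (neg_count G mo es) = 2 ^ (n - 1) - 2 powr (real n / 2 - 1) *
          (cos (real n * pi / 4) - sin (real n * pi / 4)))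
 \<and>
   (\<forall>(G :: ('a, 'b) monoid_scheme) mo es (H :: ('c, 'd) monoid_scheme) mo' fs.
      signed_group G mo \<and> seq_in G es \<and> length es = n \<and> anticommutative G mo es
      \<and> basic G mo es \<and> pure_pos G es \<and>
      signed_group H mo' \<and> seq_in H fs \<and> length fs = n \<and> anticommutative H mo' fs
      \<and> basic H mo' fs \<and> pure_neg H mo' fs \<longrightarrow>
      (neg_count H mo' fs = neg_count G mo es \<longleftrightarrow> 4 dvd n))
 \<and>
   (4 dvd n \<longrightarrow>
     (\<forall>(G :: ('a, 'b) monoid_scheme) mo es.
      signed_group G mo \<and> generator G mo es \<and> length es = n \<and> anticommutative G mo es
      \<and> pure G mo es \<longrightarrow>
      (\<exists>fs. replacement G mo es fs \<and> anticommutative G mo fs \<and> pure G mo fs \<and>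
         (pure_pos G es \<longrightarrow> pure_neg G mo fs) \<and> (pure_neg G mo es \<longrightarrow> pure_pos G fs))))"
  by (intro conjI allI impI; elim conjE)
    (simp_all add: neg_count_pure_pos neg_count_pure_neg count_mod4_2_3[OF assms]
      count_mod4_1_2[OF assms, simplified] count_mod4_1_eq_3_iff[simplified]
      pure_replacement_opposite_signature)

end
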